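(* Fix real numbers $\lambda>0$, $u$, $V$, $\alpha$. Let $c_1=-1$, $c_2=0$, $c_3=1$ and let $P_1=1$, $P_2=\lambda X$, $P_3=\lambda^2(3X^2-2)$. Let $\widehat P_1=1$ and let $\widehat P_2,\widehat P_3$ be real polynomials of degree at most $2$ such that the matrix $\widehat M=(\widehat P_k(c_j))_{1\le k,j\le 3}$ is invertible. Let $C$ be the (invertible) $3\times 3$ matrix with $\widehat M = CM$, where $M=(P_k(c_j))_{1\le k,j\le 3}$ (so the first row of $C$ is $(1,0,0)$). Let $T$ (resp. $\widehat T$) be the $3\times 3$ matrix defined by $P_k(c_j-u)=\sum_{l=1}^3 T_{k,l}P_l(c_j)$ (resp. $\widehat P_k(c_j-u)=\sum_{l=1}^3 \widehat T_{k,l}\widehat P_l(c_j)$) for all $1\le k,j\le 3$. Let $$E=\begin{pmatrix}1&0&0\\ V\lambda&0&0\\ \alpha\lambda^2&0&0\end{pmatrix},\qquad \widehat E = CE,$$ and for real $s,s'$ let $S=\widehat S=\mathrm{diag}(0,s,s')$. Define $$R=M^{-1}T^{-1}\bigl(I+S(TET^{-1}-I)\bigr)TM,\qquad \widehat R=\widehat M^{-1}\widehat T^{-1}\bigl(I+\widehat S(\widehat T\widehat E\widehat T^{-1}-I)\bigr)\widehat T\widehat M,$$ where $I$ is the $3\times3$ identity. Then $\widehat R=R$ for all $(s,s')\in\mathbb{R}^2$ if and only if $\widehat P_2\in\operatorname{span}(P_1,P_2)$ and $\widehat P_3\in\operatorname{span}(P_1,P_3)$ in $\mathbb{R}[X]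/\bigl(X(X-1)(X+1)\bigr)$.
   Context: This concerns the D1Q3 lattice Boltzmann scheme with relative velocity $u$: the moments of the distribution vector $F=(f_1,f_2,f_3)^T$ are $\sum_j P_k(c_j-u)f_j$, $k=1,2,3$; $M$ maps $F$ to the moments with $u=0$ and $T$ is the change of basis to the moments with relative velocity $u$; $E$ encodes the equilibrium values $\rho^{eq}=\rho$, $q^{eq}(0)=\lambda V\rho$, $\varepsilon^{eq}(0)=\lambda^2\alpha\rho$; $S$ contains the relaxation parameters; and $R$ is the matrix of the relaxation step $F^\star=RF$. The hatted objects describe the same scheme built from another choice of moment polynomials $(\widehat P_1,\widehat P_2,\widehat P_3)$ with the same first moment, the same equilibrium distributions and the same relaxation parameters. *)

theory Defs
  imports "HOL-Analysis.Analysis" "HOL-Computational_Algebra.Polynomial"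
begin

text \<open>Indices 1,2,3 are the three elements of the numeral type 3 (where 3 = 0).\<close>

definition vel :: "3 \<Rightarrow> real" where
  "vel j = (if j = 1 then -1 else if j = 2 then 0 else 1)"

definition Pstd :: "real \<Rightarrow> 3 \<Rightarrow> real poly" where
  "Pstd lam k = (if k = 1 then 1 else if k = 2 then [:0, lam:]
                 else smult (lam^2) [:-2, 0, 3:])"

definition Phat :: "real poly \<Rightarrow> real poly \<Rightarrow> 3 \<Rightarrow> real poly" where
  "Phat P2 P3 k = (if k = 1 then 1 else if k = 2 then P2 else P3)"

definition momat :: "(3 \<Rightarrow> real poly) \<Rightarrow> real \<Rightarrow> real^3^3" where
  "momat P u = (\<chi> k j. poly (P k) (vel j - u))"

definition Eq_mat :: "real \<Rightarrow> real \<Rightarrow> real \<Rightarrow> real^3^3" where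
  "Eq_mat lam V alpha = (\<chi> k l. if l = 1 then
      (if k = 1 then 1 else if k = 2 then V * lam else alpha * lam^2) else 0)"

definition S_mat :: "real \<Rightarrow> real \<Rightarrow> real^3^3" where
  "S_mat s s' = (\<chi> k l. if k = l then
      (if k = 1 then 0 else if k = 2 then s else s') else 0)"

definition relax :: "real^3^3 \<Rightarrow> real^3^3 \<Rightarrow> real^3^3 \<Rightarrow> real^3^3 \<Rightarrow> real^3^3" where
  "relax M T E S = matrix_inv M ** matrix_inv T **
     (mat 1 + S ** (T ** E ** matrix_inv T - mat 1)) ** T ** M"

end

theory Submission
  imports Defs
begin

text \<open>
  All polynomials involved have degree at most 2, so the shifted moment matrices are related
  by the same change of basis as the unshifted ones: \<open>M\<^sub>h = C M\<close> forces
  \<open>T\<^sub>h = C T C\<^sup>-\<^sup>1\<close>. Since the first row of \<open>C\<close> is \<open>(1,0,0)\<close> and \<open>E\<close> has only a first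
  column, \<open>E C = E\<close>, and conjugating both relaxation matrices by \<open>C T M\<close> shows that
  \<open>R\<^sub>h = R\<close> iff \<open>S C T (E - I) = C S T (E - I)\<close>. For the explicit \<open>C\<close> this holds for all
  \<open>s, s'\<close> iff the \<open>X\<^sup>2\<close>-coefficient of the second and the \<open>X\<close>-coefficient of the third hatted
  polynomial vanish. Modulo \<open>X\<^sup>3 - X\<close> a polynomial of degree at most 2 is its own unique
  representative, so these are exactly the two span conditions.
\<close>

lemma matrix_inv_right: "invertible A \<Longrightarrow> A ** matrix_inv A = mat 1"
  unfolding invertible_def matrix_inv_def by (rule someI2_ex) auto

lemma matrix_inv_left: "invertible A \<Longrightarrow> matrix_inv A ** A = mat 1"
  unfolding invertible_def matrix_inv_def by (rule someI2_ex) auto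

lemma matrix_mul_left_cancel:
  "invertible A \<Longrightarrow> A ** X = A ** Y \<longleftrightarrow> X = Y"
  for A :: "'a::semiring_1^'n^'n"
  by (metis matrix_inv_left matrix_mul_assoc matrix_mul_lid)

lemma matrix_mul_right_cancel:
  "invertible A \<Longrightarrow> X ** A = Y ** A \<longleftrightarrow> X = Y"
  for A :: "'a::semiring_1^'n^'n"
  by (metis matrix_inv_right matrix_mul_assoc matrix_mul_rid)

lemma matrix_diff_ldistrib: "A ** (B - C) = A ** B - A ** C"
  for A :: "'a::ring_1^'n^'m"
  by (simp add: matrix_matrix_mult_def vec_eq_iff sum_subtractf algebra_simps)

lemma matrix_diff_rdistrib: "(A - B) ** C = A ** C - B ** C"
  for A :: "'a::ring_1^'n^'m"
  by (simp add: matrix_matrix_mult_def vec_eq_iff sum_subtractf algebra_simps)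

lemma matrix_add_rdistrib: "(A + B) ** C = A ** C + B ** C"
  for A :: "'a::semiring_1^'n^'m"
  by (simp add: matrix_matrix_mult_def vec_eq_iff sum.distrib algebra_simps)

lemma matrix_mul_inv_cancel_right: "invertible A \<Longrightarrow> X ** A ** matrix_inv A = X"
  by (metis matrix_inv_right matrix_mul_assoc matrix_mul_rid)

lemma matrix_mul_inv_cancel_left: "invertible A \<Longrightarrow> X ** matrix_inv A ** A = X"
  by (metis matrix_inv_left matrix_mul_assoc matrix_mul_rid)

lemma relax_sub_id:
  assumes "invertible M" "invertible T"
  shows "T ** M ** (relax M T E S - mat 1) = S ** T ** (E - mat 1) ** M"
  using assms
  by (simp add: relax_def matrix_diff_ldistrib matrix_diff_rdistrib matrix_add_ldistrib
      matrix_add_rdistrib matrix_mul_assoc matrix_inv_right matrix_mul_inv_cancel_right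
      matrix_mul_inv_cancel_left)

lemma relax_change_of_basis_eq_iff:
  assumes M: "invertible M" and T: "invertible T" and C: "invertible C"
    and conj: "Th ** C = C ** T" and EC: "E ** C = E"
  shows "relax (C ** M) Th (C ** E) S = relax M T E S \<longleftrightarrow>
         S ** C ** T ** (E - mat 1) = C ** S ** T ** (E - mat 1)"
proof -
  have Th_eq: "Th = C ** T ** matrix_inv C"
    using conj by (metis C matrix_mul_inv_cancel_right)
  have Th: "invertible Th"
    unfolding Th_eq using C T invertible_mult invertible_def matrix_inv_left matrix_inv_right by metis
  have CM: "invertible (C ** M)" and CTM: "invertible (C ** T ** M)"
    using C M T invertible_mult by blast+
  have conj': "X ** Th ** C = X ** C ** T" and EC': "X ** E ** C = X ** E" for X
    by (simp_all add: conj EC flip: matrix_mul_assoc)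
  have hat: "C ** T ** M ** (relax (C ** M) Th (C ** E) S - mat 1) = S ** C ** T ** (E - mat 1) ** M"
    using relax_sub_id[OF CM Th, of "C ** E" S]
    by (simp add: matrix_diff_rdistrib matrix_diff_ldistrib matrix_mul_assoc conj conj' EC')
  have std: "C ** T ** M ** (relax M T E S - mat 1) = C ** S ** T ** (E - mat 1) ** M"
    using arg_cong[OF relax_sub_id[OF M T, of E S], of "(**) C"] by (simp add: matrix_mul_assoc)
  have "relax (C ** M) Th (C ** E) S = relax M T E S \<longleftrightarrow>
        C ** T ** M ** (relax (C ** M) Th (C ** E) S - mat 1) = C ** T ** M ** (relax M T E S - mat 1)"
    by (simp add: matrix_mul_left_cancel[OF CTM])
  also have "\<dots> \<longleftrightarrow> S ** C ** T ** (E - mat 1) ** M = C ** S ** T ** (E - mat 1) ** M"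
    by (simp only: hat std)
  also have "\<dots> \<longleftrightarrow> S ** C ** T ** (E - mat 1) = C ** S ** T ** (E - mat 1)"
    by (rule matrix_mul_right_cancel[OF M])
  finally show ?thesis .
qed

lemma degree_le_2_eq_pCons:
  "degree p \<le> 2 \<Longrightarrow> p = [:coeff p 0, coeff p 1, coeff p 2:]"
  by (rule poly_eqI) (auto simp: coeff_pCons coeff_eq_0 numeral_2_eq_2 split: nat.split)

lemma dvd_iff_eq_0_if_degree_less:
  "degree p < degree q \<Longrightarrow> q dvd p \<longleftrightarrow> p = 0"
  for p q :: "'a::{comm_semiring_1,semiring_no_zero_divisors} poly"
  using dvd_imp_degree_le by force

lemma degree_Pstd_le: "degree (Pstd lam k) \<le> 2"
  by (simp add: Pstd_def degree_smult_le)

lemma cubic_dvd_diff_span_iff: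
  fixes p P Q :: "real poly"
  assumes "degree p \<le> 2" "degree P \<le> 2" "degree Q \<le> 2"
  shows "[:0,1:] * [:-1,1:] * [:1,1:] dvd p - (smult a P + smult b Q) \<longleftrightarrow>
         p = smult a P + smult b Q"
proof -
  have "degree (p - (smult a P + smult b Q)) \<le> 2"
    using assms by (intro degree_diff_le degree_add_le order.trans[OF degree_smult_le]) auto
  moreover have "degree ([:0,1:] * [:-1,1:] * [:1::real,1:]) = 3"
    by (simp add: degree_mult_eq)
  ultimately show ?thesis
    by (simp add: dvd_iff_eq_0_if_degree_less)
qed

lemma cubic_dvd_diff_span_Pstd_12_iff:
  assumes "lam \<noteq> 0" "degree p \<le> 2"
  shows "(\<exists>a b. [:0,1:] * [:-1,1:] * [:1,1:] dvd p - (smult a (Pstd lam 1) + smult b (Pstd lam 2)))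
         \<longleftrightarrow> coeff p 2 = 0"
proof -
  have "(\<exists>a b. p = smult a (Pstd lam 1) + smult b (Pstd lam 2)) \<longleftrightarrow> coeff p 2 = 0"
  proof
    assume "coeff p 2 = 0"
    then have "p = smult (coeff p 0) (Pstd lam 1) + smult (coeff p 1 / lam) (Pstd lam 2)"
      using assms by (subst degree_le_2_eq_pCons) (simp_all add: Pstd_def)
    then show "\<exists>a b. p = smult a (Pstd lam 1) + smult b (Pstd lam 2)" by blast
  qed (auto simp: Pstd_def numeral_2_eq_2)
  then show ?thesis
    by (simp only: cubic_dvd_diff_span_iff assms(2) degree_Pstd_le)
qed

lemma cubic_dvd_diff_span_Pstd_13_iff:
  assumes "lam \<noteq> 0" "degree p \<le> 2"
  shows "(\<exists>a b. [:0,1:] * [:-1,1:] * [:1,1:] dvd p - (smult a (Pstd lam 1) + smult b (Pstd lam 3)))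
         \<longleftrightarrow> coeff p 1 = 0"
proof -
  have "(\<exists>a b. p = smult a (Pstd lam 1) + smult b (Pstd lam 3)) \<longleftrightarrow> coeff p 1 = 0"
  proof
    assume "coeff p 1 = 0"
    then have "p = smult (coeff p 0 + 2/3 * coeff p 2) (Pstd lam 1) + smult (coeff p 2 / (3 * lam^2)) (Pstd lam 3)"
      using assms by (subst degree_le_2_eq_pCons) (simp_all add: Pstd_def)
    then show "\<exists>a b. p = smult a (Pstd lam 1) + smult b (Pstd lam 3)" by blast
  qed (auto simp: Pstd_def numeral_2_eq_2)
  then show ?thesis
    by (simp only: cubic_dvd_diff_span_iff assms(2) degree_Pstd_le)
qed

definition mat3 :: "'a \<Rightarrow> 'a \<Rightarrow> 'a \<Rightarrow> 'a \<Rightarrow> 'a \<Rightarrow> 'a \<Rightarrow> 'a \<Rightarrow> 'a \<Rightarrow> 'a \<Rightarrow> 'a^3^3" where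
  "mat3 a b c d e f g h i = (\<chi> r s.
     if r = 1 then (if s = 1 then a else if s = 2 then b else c)
     else if r = 2 then (if s = 1 then d else if s = 2 then e else f)
     else (if s = 1 then g else if s = 2 then h else i))"

lemma mat3_mult:
  "mat3 a b c d e f g h i ** mat3 a' b' c' d' e' f' g' h' i' =
   mat3 (a*a' + b*d' + c*g') (a*b' + b*e' + c*h') (a*c' + b*f' + c*i')
        (d*a' + e*d' + f*g') (d*b' + e*e' + f*h') (d*c' + e*f' + f*i')
        (g*a' + h*d' + i*g') (g*b' + h*e' + i*h') (g*c' + h*f' + i*i')"
  for a b c d e f g h i a' b' c' d' e' f' g' h' i' :: "'a::semiring_1"
  by (simp add: mat3_def matrix_matrix_mult_def sum_3 vec_eq_iff forall_3)

lemma mat3_eq_iff: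
  "mat3 a b c d e f g h i = mat3 a' b' c' d' e' f' g' h' i' \<longleftrightarrow>
   a = a' \<and> b = b' \<and> c = c' \<and> d = d' \<and> e = e' \<and> f = f' \<and> g = g' \<and> h = h' \<and> i = i'"
  by (simp add: mat3_def vec_eq_iff forall_3)

lemma mat3_diff:
  "mat3 a b c d e f g h i - mat3 a' b' c' d' e' f' g' h' i' =
   mat3 (a - a') (b - b') (c - c') (d - d') (e - e') (f - f') (g - g') (h - h') (i - i')"
  for a b c d e f g h i a' b' c' d' e' f' g' h' i' :: "'a::ab_group_add"
  by (simp add: mat3_def vec_eq_iff forall_3)

lemma mat_1_eq_mat3: "mat 1 = mat3 1 0 0 0 1 0 0 0 (1::'a::zero_neq_one)"
  by (simp add: mat3_def vec_eq_iff forall_3 mat_def)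

lemma det_mat3:
  "det (mat3 a b c d e f g h i) = a*e*i - a*f*h - b*d*i + b*f*g + c*d*h - c*e*g"
  for a b c d e f g h i :: "'a::comm_ring_1"
  by (simp add: det_3 mat3_def algebra_simps)

lemma invertible_mat3_iff:
  "invertible (mat3 a b c d e f g h i) \<longleftrightarrow> a*e*i - a*f*h - b*d*i + b*f*g + c*d*h - c*e*g \<noteq> 0"
  for a b c d e f g h i :: real
  by (simp add: invertible_det_nz det_mat3)

lemma Eq_mat_eq_mat3: "Eq_mat lam V alpha = mat3 1 0 0 (V*lam) 0 0 (alpha*lam^2) 0 0"
  by (simp add: mat3_def vec_eq_iff forall_3 Eq_mat_def)

lemma S_mat_eq_mat3: "S_mat s s' = mat3 0 0 0 0 s 0 0 0 s'"
  by (simp add: mat3_def vec_eq_iff forall_3 S_mat_def)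

lemma momat_Pstd:
  "momat (Pstd lam) u = mat3 1 1 1 (lam*(-1-u)) (lam*(-u)) (lam*(1-u))
     (lam^2*(3*(-1-u)^2-2)) (lam^2*(3*u^2-2)) (lam^2*(3*(1-u)^2-2))"
  by (simp add: momat_def mat3_def vec_eq_iff forall_3 vel_def Pstd_def algebra_simps power2_eq_square)

lemma invertible_momat_Pstd: "lam \<noteq> 0 \<Longrightarrow> invertible (momat (Pstd lam) 0)"
  by (simp add: momat_Pstd invertible_mat3_iff algebra_simps power2_eq_square)

definition shift_mat :: "real \<Rightarrow> real \<Rightarrow> real^3^3" where
  "shift_mat lam u = mat3 1 0 0 (-lam*u) 1 0 (3*lam^2*u^2) (-6*lam*u) 1"

text \<open>Row k lists the coordinates of the k-th hatted polynomial in the basis \<open>Pstd lam\<close>,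
  using \<open>X\<^sup>2 = (Pstd lam 3 / lam\<^sup>2 + 2) / 3\<close>.\<close>
definition basis_change :: "real \<Rightarrow> real poly \<Rightarrow> real poly \<Rightarrow> real^3^3" where
  "basis_change lam P2 P3 = mat3 1 0 0
     (coeff P2 0 + 2/3 * coeff P2 2) (coeff P2 1 / lam) (coeff P2 2 / (3*lam^2))
     (coeff P3 0 + 2/3 * coeff P3 2) (coeff P3 1 / lam) (coeff P3 2 / (3*lam^2))"

lemma momat_Pstd_shift: "momat (Pstd lam) u = shift_mat lam u ** momat (Pstd lam) 0"
  by (simp add: shift_mat_def momat_Pstd mat3_mult mat3_eq_iff algebra_simps power2_eq_square)

lemma invertible_shift_mat: "invertible (shift_mat lam u)"
  by (simp add: shift_mat_def invertible_mat3_iff)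

lemma momat_Phat_basis_change:
  assumes "lam \<noteq> 0" "degree P2 \<le> 2" "degree P3 \<le> 2"
  shows "momat (Phat P2 P3) u = basis_change lam P2 P3 ** momat (Pstd lam) u"
proof -
  have "poly P x = coeff P 0 + coeff P 1 * x + coeff P 2 * x^2" if "degree P \<le> 2" for P :: "real poly" and x
    by (subst degree_le_2_eq_pCons[OF that]) (simp add: algebra_simps power2_eq_square)
  then have "poly P2 x = coeff P2 0 + coeff P2 1 * x + coeff P2 2 * x^2"
    and "poly P3 x = coeff P3 0 + coeff P3 1 * x + coeff P3 2 * x^2" for x
    using assms by blast+
  then show ?thesis
    using assms(1)
    by (simp add: momat_Pstd basis_change_def mat3_mult)
      (simp add: momat_def mat3_def Phat_def vec_eq_iff forall_3 vel_def field_simps power2_eq_square)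
qed

lemma Eq_mat_mult_basis_change: "Eq_mat lam V alpha ** basis_change lam P2 P3 = Eq_mat lam V alpha"
  by (simp add: Eq_mat_eq_mat3 basis_change_def mat3_mult)

lemma shift_mat_basis_change_conj:
  assumes "lam \<noteq> 0" "degree P2 \<le> 2" "degree P3 \<le> 2"
    and Th: "momat (Phat P2 P3) u = Th ** momat (Phat P2 P3) 0"
  shows "Th ** basis_change lam P2 P3 = basis_change lam P2 P3 ** shift_mat lam u"
proof -
  let ?C = "basis_change lam P2 P3" and ?M = "momat (Pstd lam) 0"
  have "Th ** ?C ** ?M = Th ** momat (Phat P2 P3) 0"
    using momat_Phat_basis_change[OF assms(1-3)] by (simp add: matrix_mul_assoc)
  also have "\<dots> = ?C ** momat (Pstd lam) u"
    using Th momat_Phat_basis_change[OF assms(1-3)] by simp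
  also have "\<dots> = ?C ** shift_mat lam u ** ?M"
    by (metis momat_Pstd_shift matrix_mul_assoc)
  finally show ?thesis
    using matrix_mul_right_cancel[OF invertible_momat_Pstd[OF assms(1)]] by blast
qed

lemma S_mat_basis_change_commute_iff:
  fixes lam u V alpha :: real and P2 P3 :: "real poly"
  defines "C \<equiv> basis_change lam P2 P3" and "T \<equiv> shift_mat lam u"
    and "E \<equiv> Eq_mat lam V alpha"
  assumes "lam \<noteq> 0"
  shows "(\<forall>s s'. S_mat s s' ** C ** T ** (E - mat 1) = C ** S_mat s s' ** T ** (E - mat 1)) \<longleftrightarrow>
         coeff P2 2 = 0 \<and> coeff P3 1 = 0"
  using assms
  by (auto simp: C_def T_def E_def S_mat_eq_mat3 basis_change_def shift_mat_def Eq_mat_eq_mat3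
      mat_1_eq_mat3 mat3_diff mat3_mult mat3_eq_iff field_simps)

theorem proposition1:
  fixes lam u V alpha :: real and P2h P3h :: "real poly"
    and C T Th :: "real^3^3"
  assumes "lam > 0"
    and "degree P2h \<le> 2" and "degree P3h \<le> 2"
    and "invertible (momat (Phat P2h P3h) 0)"
    and "momat (Phat P2h P3h) 0 = C ** momat (Pstd lam) 0"
    and "momat (Pstd lam) u = T ** momat (Pstd lam) 0"
    and "momat (Phat P2h P3h) u = Th ** momat (Phat P2h P3h) 0"
  shows "(\<forall>s s'. relax (momat (Phat P2h P3h) 0) Th (C ** Eq_mat lam V alpha) (S_mat s s')
                = relax (momat (Pstd lam) 0) T (Eq_mat lam V alpha) (S_mat s s'))
     \<longleftrightarrow>
     ((\<exists>a b. ([:0,1:] * [:-1,1:] * [:1,1:]) dvd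
               (P2h - (smult a (Pstd lam 1) + smult b (Pstd lam 2)))) \<and>
      (\<exists>a b. ([:0,1:] * [:-1,1:] * [:1,1:]) dvd
               (P3h - (smult a (Pstd lam 1) + smult b (Pstd lam 3)))))"
proof -
  let ?M = "momat (Pstd lam) 0" and ?C = "basis_change lam P2h P3h" and ?E = "Eq_mat lam V alpha"
  have lam: "lam \<noteq> 0" using assms(1) by simp
  have M: "invertible ?M" using invertible_momat_Pstd[OF lam] .
  have Mh: "momat (Phat P2h P3h) 0 = ?C ** ?M"
    using momat_Phat_basis_change[OF lam assms(2,3)] .
  have C_eq: "C = ?C" and T_eq: "T = shift_mat lam u"
    using assms(5,6) Mh momat_Pstd_shift matrix_mul_right_cancel[OF M] by metis+
  have C: "invertible ?C"
    using assms(4) Mh invertible_right_inverse matrix_inv_right matrix_mul_assoc by metis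
  have "relax (?C ** ?M) Th (?C ** ?E) (S_mat s s') = relax ?M T ?E (S_mat s s') \<longleftrightarrow>
        S_mat s s' ** ?C ** T ** (?E - mat 1) = ?C ** S_mat s s' ** T ** (?E - mat 1)" for s s'
    unfolding T_eq
    using relax_change_of_basis_eq_iff[OF M invertible_shift_mat C] Eq_mat_mult_basis_change
      shift_mat_basis_change_conj[OF lam assms(2,3,7)] by blast
  then show ?thesis
    unfolding Mh C_eq
    using S_mat_basis_change_commute_iff[OF lam, of P2h P3h u V alpha]
      cubic_dvd_diff_span_Pstd_12_iff[OF lam assms(2)] cubic_dvd_diff_span_Pstd_13_iff[OF lam assms(3)]
    by (simp add: T_eq)
qed

end
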